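(* For every $n\ge 6$ there exist two non-isomorphic graphs $G_n,H_n$ on $n$ vertices and a graph $F$ such that, with $\mathcal{F}=\{F\}$, for every number of rounds $T\ge 0$, $$\big\|\overline{\phi^{(T)}_{\mathsf{WL}}}(G_n)-\overline{\phi^{(T)}_{\mathsf{WL}}}(H_n)\big\|=0\quad\text{and}\quad\big\|\overline{\phi^{(T)}_{\mathsf{WL},\mathcal{F}}}(G_n)-\overline{\phi^{(T)}_{\mathsf{WL},\mathcal{F}}}(H_n)\big\|=\sqrt{2}.$$
   Context: Graphs are finite, simple, undirected, unlabeled. $1$-WL: $C^1_0$ constant, $C^1_t(v)=\mathsf{RELABEL}(C^1_{t-1}(v),\{\!\{C^1_{t-1}(u):u\in N(v)\}\!\})$, $\mathsf{RELABEL}$ a fixed injective map shared by all graphs. $1$-WL$_{\mathcal{F}}$: same update with initial colour $C^{1,\mathcal{F}}_0(v)=(\ell_F(v))_{F\in\mathcal{F}}$, $\ell_F(v)=1$ if $v$ belongs to some vertex set $X$ with induced subgraph $G[X]$ isomorphic to $F$, else $0$. For round $t$, $\phi_t(G)$ (resp. $\phi_{\mathcal{F},t}(G)$) is the vector indexed by the colours occurring at round $t$ (in the graphs considered) counting vertices of $G$ of each colour; $\phi^{(T)}_{\mathsf{WL}}(G)=[\phi_0(G),\dots,\phi_T(G)]$, $\phi^{(T)}_{\mathsf{WL},\mathcal{F}}(G)=[\phi_{\mathcal{F},0}(G),\dots,\phi_{\mathcal{F},T}(G)]$; a bar denotes normalisation to unit Euclidean norm; $\|\cdot\|$ is the Euclidean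 norm. *)

theory Defs
  imports Complex_Main "HOL-Library.Multiset"
begin

definition is_graph :: "'v set \<Rightarrow> 'v set set \<Rightarrow> bool" where
  "is_graph V E \<longleftrightarrow> finite V \<and> (\<forall>e\<in>E. e \<subseteq> V \<and> card e = 2)"

definition graph_iso :: "'v set \<Rightarrow> 'v set set \<Rightarrow> 'w set \<Rightarrow> 'w set set \<Rightarrow> bool" where
  "graph_iso V E V' E' \<longleftrightarrow> (\<exists>f. bij_betw f V V' \<and>
     (\<forall>u\<in>V. \<forall>w\<in>V. {u, w} \<in> E \<longleftrightarrow> {f u, f w} \<in> E'))"

definition nbrs :: "'v set \<Rightarrow> 'v set set \<Rightarrow> 'v \<Rightarrow> 'v set" where
  "nbrs V E v = {u \<in> V. {u, v} \<in> E}"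

definition induced_edges :: "'v set set \<Rightarrow> 'v set \<Rightarrow> 'v set set" where
  "induced_edges E X = {e \<in> E. e \<subseteq> X}"

definition ell :: "'v set \<Rightarrow> 'v set set \<Rightarrow> ('w set \<times> 'w set set) \<Rightarrow> 'v \<Rightarrow> nat" where
  "ell V E F v = (if \<exists>X. X \<subseteq> V \<and> v \<in> X \<and> graph_iso X (induced_edges E X) (fst F) (snd F)
                  then 1 else 0)"

text \<open>WL colours; the constructors give a fixed injective RELABEL shared by all graphs.\<close>
datatype 'c wlcol = Init 'c | Relabel "'c wlcol" "'c wlcol multiset"

primrec wl :: "'v set \<Rightarrow> 'v set set \<Rightarrow> ('v \<Rightarrow> 'c) \<Rightarrow> nat \<Rightarrow> 'v \<Rightarrow> 'c wlcol" where
  "wl V E c0 0 v = Init (c0 v)"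
| "wl V E c0 (Suc t) v =
     Relabel (wl V E c0 t v) (image_mset (wl V E c0 t) (mset_set (nbrs V E v)))"

definition init_plain :: "'v \<Rightarrow> nat list" where
  "init_plain v = []"

definition init_F :: "'v set \<Rightarrow> 'v set set \<Rightarrow> ('w set \<times> 'w set set) list \<Rightarrow> 'v \<Rightarrow> nat list" where
  "init_F V E Fs v = map (\<lambda>F. ell V E F v) Fs"

definition phi :: "'v set \<Rightarrow> 'v set set \<Rightarrow> ('v \<Rightarrow> 'c) \<Rightarrow> nat \<Rightarrow> nat \<times> 'c wlcol \<Rightarrow> real" where
  "phi V E c0 T p = (if fst p \<le> T then real (card {v \<in> V. wl V E c0 (fst p) v = snd p}) else 0)"

definition phi_supp :: "'v set \<Rightarrow> 'v set set \<Rightarrow> ('v \<Rightarrow> 'c) \<Rightarrow> nat \<Rightarrow> (nat \<times> 'c wlcol) set" where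
  "phi_supp V E c0 T = {(t, wl V E c0 t v) | t v. t \<le> T \<and> v \<in> V}"

definition l2norm :: "'i set \<Rightarrow> ('i \<Rightarrow> real) \<Rightarrow> real" where
  "l2norm S x = sqrt (\<Sum>i\<in>S. (x i)^2)"

text \<open>|| bar(phi^{(T)})(G) - bar(phi^{(T)})(H) ||; the index set is all colours
occurring in G or H (other coordinates are zero in both).\<close>
definition wl_dist ::
  "'v set \<Rightarrow> 'v set set \<Rightarrow> ('v \<Rightarrow> 'c) \<Rightarrow> 'v set \<Rightarrow> 'v set set \<Rightarrow> ('v \<Rightarrow> 'c) \<Rightarrow> nat \<Rightarrow> real" where
  "wl_dist V E c V' E' c' T =
     (let S = phi_supp V E c T \<union> phi_supp V' E' c' T;
          x = phi V E c T; y = phi V' E' c' T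
      in l2norm S (\<lambda>p. x p / l2norm S x - y p / l2norm S y))"

end

theory Submission
  imports Defs
begin

text \<open>Take \<open>G\<^sub>n = C\<^sub>n\<close> and \<open>H\<^sub>n = K\<^sub>3 + C\<^sub>n\<^sub>-\<^sub>3\<close>. Both graphs are
  2-regular, so plain 1-WL gives all their vertices one and the same colour in every round, and
  the histograms coincide. Take \<open>F = H\<^sub>n\<close>: then \<open>\<ell>\<^sub>F\<close> is constantly 1 on
  \<open>H\<^sub>n\<close> and constantly 0 on \<open>G\<^sub>n\<close>, since an induced copy of \<open>F\<close> in \<open>G\<^sub>n\<close>
  would be all of \<open>G\<^sub>n\<close>, which is triangle-free. A WL colour remembers its initial
  colour, so the \<open>1-WL\<^sub>F\<close> histograms of \<open>G\<^sub>n\<close> and \<open>H\<^sub>n\<close> have disjoint supports in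
  every round, and two orthogonal unit vectors are at distance \<open>\<surd>2\<close>.\<close>

lemma l2norm_normalised_diff_orthogonal:
  fixes x y :: "'i \<Rightarrow> real"
  assumes fin: "finite A" "finite B" and disj: "A \<inter> B = {}"
    and x_B: "\<And>p. p \<in> B \<Longrightarrow> x p = 0" and y_A: "\<And>p. p \<in> A \<Longrightarrow> y p = 0"
    and x_pos: "(\<Sum>p\<in>A. (x p)\<^sup>2) > 0" and y_pos: "(\<Sum>p\<in>B. (y p)\<^sup>2) > 0"
  shows "l2norm (A \<union> B) (\<lambda>p. x p / l2norm (A \<union> B) x - y p / l2norm (A \<union> B) y) = sqrt 2"
proof -
  define sx where "sx = (\<Sum>p\<in>A. (x p)\<^sup>2)"
  define sy where "sy = (\<Sum>p\<in>B. (y p)\<^sup>2)"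
  have norm_x: "l2norm (A \<union> B) x = sqrt sx"
    using sum.union_disjoint[OF fin disj, of "\<lambda>p. (x p)\<^sup>2"] x_B by (simp add: l2norm_def sx_def)
  have norm_y: "l2norm (A \<union> B) y = sqrt sy"
    using sum.union_disjoint[OF fin disj, of "\<lambda>p. (y p)\<^sup>2"] y_A by (simp add: l2norm_def sy_def)
  have "(\<Sum>p\<in>A \<union> B. (x p / sqrt sx - y p / sqrt sy)\<^sup>2)
      = (\<Sum>p\<in>A. (x p)\<^sup>2 / sx) + (\<Sum>p\<in>B. (y p)\<^sup>2 / sy)"
    using x_pos y_pos x_B y_A unfolding sx_def sy_def sum.union_disjoint[OF fin disj]
    by (intro arg_cong2[where f = "(+)"] sum.cong) (auto simp: power_divide)
  also have "\<dots> = 2"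
    using x_pos y_pos by (simp add: sx_def sy_def flip: sum_divide_distrib)
  finally show ?thesis
    unfolding norm_x norm_y by (simp add: l2norm_def)
qed

primrec wlcol_init :: "'c wlcol \<Rightarrow> 'c" where
  "wlcol_init (Init c) = c"
| "wlcol_init (Relabel a m) = wlcol_init a"

lemma wlcol_init_wl [simp]: "wlcol_init (wl V E c0 t v) = c0 v"
  by (induction t) auto

lemma finite_phi_supp:
  assumes "finite V"
  shows "finite (phi_supp V E c0 T)"
proof -
  have "phi_supp V E c0 T = (\<lambda>(t, v). (t, wl V E c0 t v)) ` ({..T} \<times> V)"
    unfolding phi_supp_def by auto
  then show ?thesis
    using assms by simp
qed

lemma wlcol_init_phi_supp:
  "p \<in> phi_supp V E c0 T \<Longrightarrow> wlcol_init (snd p) \<in> c0 ` V"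
  unfolding phi_supp_def by auto

lemma phi_eq_0_if_wlcol_init_notin:
  assumes "wlcol_init (snd p) \<notin> c0 ` V"
  shows "phi V E c0 T p = 0"
proof -
  have "{v \<in> V. wl V E c0 (fst p) v = snd p} = {}"
    using assms by (auto simp: image_iff) (metis wlcol_init_wl)
  then show ?thesis
    unfolding phi_def by (simp only: card.empty) simp
qed

lemma sum_phi_squared_pos:
  assumes "finite V" "v \<in> V"
  shows "(\<Sum>p\<in>phi_supp V E c0 T. (phi V E c0 T p)\<^sup>2) > 0"
proof -
  let ?p = "(0 :: nat, wl V E c0 0 v)"
  have p_supp: "?p \<in> phi_supp V E c0 T"
    unfolding phi_supp_def using assms(2) by blast
  have "card {u \<in> V. wl V E c0 0 u = wl V E c0 0 v} > 0"
    using assms by (auto simp: card_gt_0_iff)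
  then have "(phi V E c0 T ?p)\<^sup>2 > 0"
    unfolding phi_def by simp
  also have "\<dots> \<le> (\<Sum>p\<in>phi_supp V E c0 T. (phi V E c0 T p)\<^sup>2)"
    by (rule member_le_sum[OF p_supp]) (auto simp: finite_phi_supp[OF assms(1)])
  finally show ?thesis .
qed

lemma wl_dist_eq_0_if_same_colours:
  assumes "\<And>t v. v \<in> V \<Longrightarrow> wl V E1 c1 t v = wl V E2 c2 t v"
  shows "wl_dist V E1 c1 V E2 c2 T = 0"
proof -
  have "phi V E1 c1 T = phi V E2 c2 T" and "phi_supp V E1 c1 T = phi_supp V E2 c2 T"
    using assms unfolding phi_def phi_supp_def by (auto cong: conj_cong) metis
  then show ?thesis
    unfolding wl_dist_def l2norm_def by simp
qed

lemma wl_dist_eq_sqrt2_if_disjoint_init: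
  assumes "finite V" "v1 \<in> V" "finite V'" "v2 \<in> V'" and disj: "c1 ` V \<inter> c2 ` V' = {}"
  shows "wl_dist V E1 c1 V' E2 c2 T = sqrt 2"
  unfolding wl_dist_def Let_def
proof (rule l2norm_normalised_diff_orthogonal)
  show "phi_supp V E1 c1 T \<inter> phi_supp V' E2 c2 T = {}"
    using disj by (blast dest: wlcol_init_phi_supp)
  show "phi V E1 c1 T p = 0" if "p \<in> phi_supp V' E2 c2 T" for p
    using that disj by (blast intro: phi_eq_0_if_wlcol_init_notin dest: wlcol_init_phi_supp)
  show "phi V' E2 c2 T p = 0" if "p \<in> phi_supp V E1 c1 T" for p
    using that disj by (blast intro: phi_eq_0_if_wlcol_init_notin dest: wlcol_init_phi_supp)
qed (use assms in \<open>auto intro: finite_phi_supp sum_phi_squared_pos\<close>)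

primrec regular_wlcol :: "'c \<Rightarrow> nat \<Rightarrow> nat \<Rightarrow> 'c wlcol" where
  "regular_wlcol c d 0 = Init c"
| "regular_wlcol c d (Suc t) = Relabel (regular_wlcol c d t) (replicate_mset d (regular_wlcol c d t))"

lemma wl_regular:
  assumes "\<And>v. v \<in> V \<Longrightarrow> card (nbrs V E v) = d" and "\<And>v. v \<in> V \<Longrightarrow> c0 v = c"
  shows "v \<in> V \<Longrightarrow> wl V E c0 t v = regular_wlcol c d t"
proof (induction t arbitrary: v)
  case 0
  then show ?case using assms(2) by simp
next
  case (Suc t)
  have "image_mset (wl V E c0 t) (mset_set (nbrs V E v))
        = image_mset (\<lambda>_. regular_wlcol c d t) (mset_set (nbrs V E v))"
  proof (rule image_mset_cong)
    fix u assume "u \<in># mset_set (nbrs V E v)"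
    then have "u \<in> V"
      by (simp add: count_mset_set' nbrs_def flip: count_greater_zero_iff split: if_splits)
    then show "wl V E c0 t u = regular_wlcol c d t" using Suc.IH by blast
  qed
  also have "\<dots> = replicate_mset d (regular_wlcol c d t)"
    using assms(1)[OF Suc.prems] by (simp add: image_mset_const_eq)
  finally show ?case using Suc by simp
qed

lemma wl_dist_plain_regular:
  assumes "\<And>v. v \<in> V \<Longrightarrow> card (nbrs V E1 v) = d" "\<And>v. v \<in> V \<Longrightarrow> card (nbrs V E2 v) = d"
  shows "wl_dist V E1 init_plain V E2 init_plain T = 0"
  by (rule wl_dist_eq_0_if_same_colours)
    (simp add: wl_regular[OF assms(1)] wl_regular[OF assms(2)] init_plain_def)

lemma ell_graph_itself:
  assumes "is_graph V E" "v \<in> V"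
  shows "ell V E (V, E) v = 1"
proof -
  have "induced_edges E V = E"
    using assms(1) unfolding induced_edges_def is_graph_def by auto
  moreover have "graph_iso V E V E"
    unfolding graph_iso_def by (rule exI[of _ id]) auto
  ultimately show ?thesis
    using assms(2) unfolding ell_def by auto
qed

lemma ell_eq_0_if_not_iso:
  assumes "is_graph V E" "card V' = card V" "\<not> graph_iso V E V' E'"
  shows "ell V E (V', E') v = 0"
proof -
  have "\<not> graph_iso X (induced_edges E X) V' E'" if "X \<subseteq> V" "v \<in> X" for X
  proof
    assume iso: "graph_iso X (induced_edges E X) V' E'"
    then have "card X = card V"
      unfolding graph_iso_def using assms(2) bij_betw_same_card by metis
    then have "X = V"
      using that assms(1) card_subset_eq unfolding is_graph_def by blast
    moreover have "induced_edges E V = E"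
      using assms(1) unfolding induced_edges_def is_graph_def by auto
    ultimately show False
      using iso assms(3) by simp
  qed
  then show ?thesis
    unfolding ell_def by auto
qed

definition has_triangle :: "'v set set \<Rightarrow> bool" where
  "has_triangle E \<longleftrightarrow> (\<exists>a b c. a \<noteq> b \<and> b \<noteq> c \<and> a \<noteq> c \<and> {a, b} \<in> E \<and> {b, c} \<in> E \<and> {a, c} \<in> E)"

lemma graph_iso_has_triangle:
  assumes "is_graph V' E'" "graph_iso V E V' E'" "has_triangle E'"
  shows "has_triangle E"
proof -
  obtain f where bij: "bij_betw f V V'"
    and edge_iff: "\<And>u w. u \<in> V \<Longrightarrow> w \<in> V \<Longrightarrow> {u, w} \<in> E \<longleftrightarrow> {f u, f w} \<in> E'"
    using assms(2) unfolding graph_iso_def by blast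
  obtain a b c where abc: "a \<noteq> b" "b \<noteq> c" "a \<noteq> c" "{a, b} \<in> E'" "{b, c} \<in> E'" "{a, c} \<in> E'"
    using assms(3) unfolding has_triangle_def by blast
  then have "a \<in> V'" "b \<in> V'" "c \<in> V'"
    using assms(1) unfolding is_graph_def by auto
  then obtain a' b' c' where "a' \<in> V" "b' \<in> V" "c' \<in> V" "a = f a'" "b = f b'" "c = f c'"
    using bij unfolding bij_betw_def by blast
  then show ?thesis
    unfolding has_triangle_def using abc edge_iff by metis
qed

definition edges_of :: "('v \<Rightarrow> 'v \<Rightarrow> bool) \<Rightarrow> 'v set set" where
  "edges_of R = {{u, v} | u v. R u v}"

lemma doubleton_in_edges_of_iff:
  assumes "symp R"
  shows "{a, b} \<in> edges_of R \<longleftrightarrow> R a b"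
  using assms unfolding edges_of_def symp_def by (auto simp: doubleton_eq_iff)

lemma is_graph_edges_of:
  assumes "finite V" "\<And>u v. R u v \<Longrightarrow> u \<in> V \<and> v \<in> V \<and> u \<noteq> v"
  shows "is_graph V (edges_of R)"
  using assms unfolding is_graph_def edges_of_def by auto

lemma nbrs_edges_of: "symp R \<Longrightarrow> nbrs V (edges_of R) v = {u \<in> V. R u v}"
  unfolding nbrs_def by (simp add: doubleton_in_edges_of_iff)

definition cycle_adj :: "nat \<Rightarrow> nat \<Rightarrow> nat \<Rightarrow> nat \<Rightarrow> bool" where
  "cycle_adj a b u v \<longleftrightarrow> a \<le> u \<and> u < b \<and> a \<le> v \<and> v < b \<and>
     (v = u + 1 \<or> u = v + 1 \<or> (u = a \<and> v = b - 1) \<or> (v = a \<and> u = b - 1))"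

lemma symp_cycle_adj: "symp (cycle_adj a b)"
  by (rule sympI) (auto simp: cycle_adj_def)

lemma symp_triangle_plus_cycle_adj: "symp (sup (cycle_adj 0 3) (cycle_adj 3 n))"
  by (intro symp_sup symp_cycle_adj)

lemma cycle_adj_in_range: "cycle_adj a b u v \<Longrightarrow> a \<le> u \<and> u < b \<and> a \<le> v \<and> v < b"
  by (simp add: cycle_adj_def)

lemma cycle_adj_neq: "a + 3 \<le> b \<Longrightarrow> cycle_adj a b u v \<Longrightarrow> u \<noteq> v"
  unfolding cycle_adj_def by auto

lemma card_cycle_adj:
  assumes "a + 3 \<le> b" "a \<le> v" "v < b"
  shows "card {u. cycle_adj a b u v} = 2"
proof -
  have "{u. cycle_adj a b u v} = {if v + 1 = b then a else v + 1, if v = a then b - 1 else v - 1}"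
    using assms unfolding cycle_adj_def by auto
  moreover have "(if v + 1 = b then a else v + 1) \<noteq> (if v = a then b - 1 else v - 1)"
    using assms by auto
  ultimately show ?thesis by simp
qed

lemma cycle_adj_triangle_free:
  "a + 4 \<le> b \<Longrightarrow> cycle_adj a b x y \<Longrightarrow> cycle_adj a b y z \<Longrightarrow> cycle_adj a b x z \<Longrightarrow> False"
  unfolding cycle_adj_def by (elim conjE disjE) linarith+

definition cycle_graph :: "nat \<Rightarrow> nat set set" where
  "cycle_graph n = edges_of (cycle_adj 0 n)"

definition triangle_plus_cycle :: "nat \<Rightarrow> nat set set" where
  "triangle_plus_cycle n = edges_of (sup (cycle_adj 0 3) (cycle_adj 3 n))"

lemma is_graph_cycle_graph: "n \<ge> 3 \<Longrightarrow> is_graph {..<n} (cycle_graph n)"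
  unfolding cycle_graph_def
  by (rule is_graph_edges_of) (auto dest: cycle_adj_in_range cycle_adj_neq[rotated])

lemma is_graph_triangle_plus_cycle: "n \<ge> 6 \<Longrightarrow> is_graph {..<n} (triangle_plus_cycle n)"
  unfolding triangle_plus_cycle_def
  by (rule is_graph_edges_of) (auto dest: cycle_adj_in_range cycle_adj_neq[rotated])

lemma card_nbrs_cycle_graph:
  assumes "n \<ge> 3" "v \<in> {..<n}"
  shows "card (nbrs {..<n} (cycle_graph n) v) = 2"
proof -
  have "nbrs {..<n} (cycle_graph n) v = {u. cycle_adj 0 n u v}"
    unfolding cycle_graph_def nbrs_edges_of[OF symp_cycle_adj] cycle_adj_def by auto
  then show ?thesis
    using assms card_cycle_adj[of 0 n v] by simp
qed

lemma card_nbrs_triangle_plus_cycle: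
  assumes "n \<ge> 6" "v \<in> {..<n}"
  shows "card (nbrs {..<n} (triangle_plus_cycle n) v) = 2"
proof -
  have "nbrs {..<n} (triangle_plus_cycle n) v
      = (if v < 3 then {u. cycle_adj 0 3 u v} else {u. cycle_adj 3 n u v})"
    unfolding triangle_plus_cycle_def nbrs_edges_of[OF symp_triangle_plus_cycle_adj]
    using assms by (auto simp: cycle_adj_def)
  then show ?thesis
    using assms card_cycle_adj[of 0 3 v] card_cycle_adj[of 3 n v] by simp
qed

lemma not_iso_cycle_graph_triangle_plus_cycle:
  assumes "n \<ge> 6"
  shows "\<not> graph_iso {..<n} (cycle_graph n) {..<n} (triangle_plus_cycle n)"
proof
  assume "graph_iso {..<n} (cycle_graph n) {..<n} (triangle_plus_cycle n)"
  moreover have "has_triangle (triangle_plus_cycle n)"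
    unfolding has_triangle_def triangle_plus_cycle_def
      doubleton_in_edges_of_iff[OF symp_triangle_plus_cycle_adj]
    by (rule exI[of _ 0], rule exI[of _ 1], rule exI[of _ 2]) (simp add: cycle_adj_def)
  ultimately have "has_triangle (cycle_graph n)"
    using graph_iso_has_triangle is_graph_triangle_plus_cycle[OF assms] by blast
  then show False
    unfolding has_triangle_def cycle_graph_def doubleton_in_edges_of_iff[OF symp_cycle_adj]
    using cycle_adj_triangle_free[of 0 n] assms by auto
qed

theorem proposition10:
  fixes n :: nat
  assumes "n \<ge> 6"
  shows "\<exists>(EG :: nat set set) (EH :: nat set set) (VF :: nat set) (EF :: nat set set).
           is_graph {..<n} EG \<and> is_graph {..<n} EH \<and> is_graph VF EF \<and>
           \<not> graph_iso {..<n} EG {..<n} EH \<and>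
           (\<forall>T. wl_dist {..<n} EG init_plain {..<n} EH init_plain T = 0 \<and>
                wl_dist {..<n} EG (init_F {..<n} EG [(VF, EF)])
                        {..<n} EH (init_F {..<n} EH [(VF, EF)]) T = sqrt 2)"
proof -
  let ?V = "{..<n}" and ?G = "cycle_graph n" and ?H = "triangle_plus_cycle n"
  have "n \<ge> 3"
    using assms by simp
  note G = is_graph_cycle_graph[OF this] and H = is_graph_triangle_plus_cycle[OF assms]
  note not_iso = not_iso_cycle_graph_triangle_plus_cycle[OF assms]
  have "ell ?V ?G (?V, ?H) v = 0" for v
    by (rule ell_eq_0_if_not_iso[OF G refl not_iso])
  moreover have "ell ?V ?H (?V, ?H) v = 1" if "v \<in> ?V" for v
    by (rule ell_graph_itself[OF H that])
  ultimately have "init_F ?V ?G [(?V, ?H)] ` ?V \<inter> init_F ?V ?H [(?V, ?H)] ` ?V = {}"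
    by (auto simp: init_F_def)
  then have "wl_dist ?V ?G (init_F ?V ?G [(?V, ?H)]) ?V ?H (init_F ?V ?H [(?V, ?H)]) T = sqrt 2"
    for T using assms by (intro wl_dist_eq_sqrt2_if_disjoint_init[of _ 0 _ 0]) auto
  moreover have "wl_dist ?V ?G init_plain ?V ?H init_plain T = 0" for T
    using card_nbrs_cycle_graph[OF \<open>n \<ge> 3\<close>] card_nbrs_triangle_plus_cycle[OF assms]
    by (rule wl_dist_plain_regular)
  ultimately show ?thesis
    using G H not_iso by blast
qed

end
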